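(* Let $q$ be a prime power, $n,r$ integers with $r\le\lfloor n/2\rfloor$, and $0<\rho<r$. For $0 \le \delta \le \rho$, let $T_\delta = \min \sum_{i=0}^r A_i(\delta)$, where the minimum is over all integer sequences $(A_i(\delta))_{i=0}^r$ satisfying: $A_i(\delta) = 0$ for $0\le i\le \delta-1$; $1 \le A_\delta(\delta) \le N_{\mathrm{C}}(\delta)$; $0 \le A_i(\delta)\le N_{\mathrm{C}}(i)$ for $\delta+1\le i\le r$; and $\sum_{i=0}^r A_i(\delta)\sum_{s=0}^\rho J_{\mathrm{C}}(l,s,i) \ge N_{\mathrm{C}}(l)$ for all $0\le l\le r$. Then $K_{\mathrm{C}}(q,n,r,\rho) \ge \max_{0\le\delta\le\rho} T_\delta$.
   Context: $E_r(q,n)$ is the set of $r$-dimensional subspaces of $\mathrm{GF}(q)^n$, with injection distance $d_{\mathrm{I}}(U,V) = \dim(U+V)-\min\{\dim U,\dim V\}$. ${m\brack k}=\prod_{i=0}^{k-1}\frac{q^m-q^i}{q^k-q^i}$; $N_{\mathrm{C}}(d) = q^{d^2}{r\brack d}{n-r \brack d}$ is the number of elements of $E_r(q,n)$ at injection distance $d$ from a fixed one. For $0\le u,s,d\le r$, $J_{\mathrm{C}}(u,s,d)$ is the number of $W\in E_r(q,n)$ with $d_{\mathrm{I}}(W,U)=u$ and $d_{\mathrm{I}}(W,V)=s$, for any fixed $U,V\in E_r(q,n)$ with $d_{\mathrm{I}}(U,V)=d$ (it depends only on $u,s,d$). The covering radius of a nonempty $\mathcal{C}\subseteq E_r(q,n)$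 is $\max_{U}\min_{C\in\mathcal{C}} d_{\mathrm{I}}(U,C)$; $K_{\mathrm{C}}(q,n,r,\rho)$ is the minimum cardinality of a subset of $E_r(q,n)$ with covering radius at most $\rho$. *)

theory Defs
  imports "HOL-Analysis.Analysis"
begin

text \<open>Ambient space GF(q)^n is rendered as the vector type 'a^'n over a finite field 'a
  (q = CARD('a), n = CARD('n)).\<close>

definition Er :: "nat \<Rightarrow> ('a::{finite,field}^'n) set set" where
  "Er r = {U. vec.subspace U \<and> vec.dim U = r}"

definition dI :: "('a::{finite,field}^'n) set \<Rightarrow> ('a^'n) set \<Rightarrow> nat" where
  "dI U V = vec.dim (vec.span (U \<union> V)) - min (vec.dim U) (vec.dim V)"

definition gbinom :: "nat \<Rightarrow> nat \<Rightarrow> nat \<Rightarrow> real" where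
  "gbinom q m k = (\<Prod>i<k. (real q ^ m - real q ^ i) / (real q ^ k - real q ^ i))"

definition NC :: "nat \<Rightarrow> nat \<Rightarrow> nat \<Rightarrow> nat \<Rightarrow> real" where
  "NC q n r d = real q ^ (d\<^sup>2) * gbinom q r d * gbinom q (n - r) d"

text \<open>J_C(u,s,d): number of W in E_r with d_I(W,U)=u, d_I(W,V)=s for a fixed pair (U,V)
  in E_r with d_I(U,V)=d (chosen by Hilbert choice; the count does not depend on the choice).\<close>
definition JC :: "'a::{finite,field} itself \<Rightarrow> 'n::finite itself \<Rightarrow> nat \<Rightarrow> nat \<Rightarrow> nat \<Rightarrow> nat \<Rightarrow> nat" where
  "JC _ _ r u s d =
     (let P = (SOME P :: ('a::{finite,field}^'n) set \<times> ('a^'n) set.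
                 fst P \<in> Er r \<and> snd P \<in> Er r \<and> dI (fst P) (snd P) = d)
      in card {W \<in> Er r. dI W (fst P) = u \<and> dI W (snd P) = s})"

definition covering_radius :: "nat \<Rightarrow> ('a::{finite,field}^'n) set set \<Rightarrow> nat" where
  "covering_radius r C = Max ((\<lambda>U. Min ((\<lambda>c. dI U c) ` C)) ` Er r)"

definition KC :: "'a::{finite,field} itself \<Rightarrow> 'n::finite itself \<Rightarrow> nat \<Rightarrow> nat \<Rightarrow> nat" where
  "KC _ _ r \<rho> = Min {card C | C :: ('a::{finite,field}^'n) set set.
                        C \<subseteq> Er r \<and> C \<noteq> {} \<and> covering_radius r C \<le> \<rho>}"

definition feasible :: "'a::{finite,field} itself \<Rightarrow> 'n::finite itself \<Rightarrow> nat \<Rightarrow> nat \<Rightarrow> nat \<Rightarrow> (nat \<Rightarrow> int) \<Rightarrow> bool" where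
  "feasible ta tn r \<rho> \<delta> A \<longleftrightarrow>
     (let q = CARD('a::{finite,field}); n = CARD('n) in
     (\<forall>i<\<delta>. A i = 0) \<and>
     1 \<le> A \<delta> \<and> real_of_int (A \<delta>) \<le> NC q n r \<delta> \<and>
     (\<forall>i\<in>{\<delta>+1..r}. 0 \<le> A i \<and> real_of_int (A i) \<le> NC q n r i) \<and>
     (\<forall>l\<le>r. real_of_int (\<Sum>i=0..r. A i * (\<Sum>s=0..\<rho>. int (JC ta tn r l s i))) \<ge> NC q n r l))"

definition T :: "'a::{finite,field} itself \<Rightarrow> 'n::finite itself \<Rightarrow> nat \<Rightarrow> nat \<Rightarrow> nat \<Rightarrow> int" where
  "T ta tn r \<rho> \<delta> = Min {(\<Sum>i=0..r. A i) | A. feasible ta tn r \<rho> \<delta> A}"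

end

theory Submission
  imports Defs
begin

text \<open>
  Given a code \<open>C\<close> of covering radius at most \<open>\<rho>\<close> and \<open>\<delta> \<le> \<rho>\<close>, we find a code \<open>C'\<close> with
  \<open>|C'| \<le> |C|\<close>, still of covering radius at most \<open>\<rho>\<close>, and a space \<open>U\<close> at distance exactly \<open>\<delta>\<close>
  from \<open>C'\<close>.
  If \<open>\<delta>\<close> does not exceed the actual covering radius of \<open>C\<close>, take \<open>C' = C\<close>: the distance to \<open>C\<close>
  drops by exactly one along a step towards a nearest codeword, so it takes every smaller value.
  Otherwise let \<open>U\<close> be a deepest hole and push every codeword closer than \<open>\<delta>\<close> out to distance \<open>\<delta>\<close>
  from \<open>U\<close>, which is possible as \<open>2r \<le> n\<close>.

  Then \<open>A\<^sub>i = #{c \<in> C'. d(U,c) = i}\<close> is feasible: each of the \<open>N\<^sub>C(l)\<close> spaces at distance \<open>l\<close>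
  from \<open>U\<close> is within \<open>\<rho>\<close> of some codeword, and a codeword at distance \<open>i\<close> from \<open>U\<close> is within \<open>\<rho>\<close>
  of \<open>\<Sum>\<^sub>s J\<^sub>C(l,s,i)\<close> of them. This count does not depend on the pair chosen in the definition
  of \<open>J\<^sub>C\<close>, because linear automorphisms act transitively on pairs of \<open>r\<close>-spaces with a given
  intersection dimension; \<open>N\<^sub>C(l)\<close> itself is obtained by double counting pairs of ordered bases.
\<close>

section \<open>Injection distance on \<open>E\<^sub>r\<close>\<close>

lemma dim_span_Un_add_dim_Int:
  fixes U V :: "('a::field^'n) set"
  assumes "vec.subspace U" "vec.subspace V"
  shows "vec.dim (vec.span (U \<union> V)) + vec.dim (U \<inter> V) = vec.dim U + vec.dim V"
proof -
  have span_UV: "vec.span U = U" "vec.span V = V" using assms by (simp_all add: vec.span_eq_iff)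
  have "vec.span (U \<union> V) = {x + y |x y. x \<in> U \<and> y \<in> V}"
    using vec.span_Un[of U V] unfolding span_UV .
  then show ?thesis using vec.dim_sums_Int[OF assms] by simp
qed

lemma dim_Int_le_Er:
  "U \<in> Er r \<Longrightarrow> vec.dim (U \<inter> V) \<le> r"
  unfolding Er_def using vec.dim_subset[of "U \<inter> V" U] by auto

lemma dI_Er_eq:
  assumes "U \<in> Er r" "V \<in> Er r"
  shows "dI U V = r - vec.dim (U \<inter> V)"
  using assms dim_span_Un_add_dim_Int[of U V] dim_Int_le_Er[OF assms(1), of V]
  unfolding dI_def Er_def by simp

lemma dI_commute: "U \<in> Er r \<Longrightarrow> V \<in> Er r \<Longrightarrow> dI U V = dI V U"
  by (simp add: dI_Er_eq Int_commute)

lemma dI_self: "U \<in> Er r \<Longrightarrow> dI U U = 0"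
  by (simp add: dI_Er_eq Er_def)

lemma dI_le: "U \<in> Er r \<Longrightarrow> V \<in> Er r \<Longrightarrow> dI U V \<le> r"
  by (simp add: dI_Er_eq)

lemma dI_triangle:
  assumes "U \<in> Er r" "V \<in> Er r" "W \<in> Er r"
  shows "dI U W \<le> dI U V + dI V W"
proof -
  have s: "vec.subspace U" "vec.subspace V" "vec.subspace W" "vec.dim V = r"
    using assms by (auto simp: Er_def)
  have "vec.dim (vec.span ((U \<inter> V) \<union> (V \<inter> W))) + vec.dim ((U \<inter> V) \<inter> (V \<inter> W))
      = vec.dim (U \<inter> V) + vec.dim (V \<inter> W)"
    using s by (intro dim_span_Un_add_dim_Int) (auto simp: vec.subspace_inter)
  moreover have "vec.dim (vec.span ((U \<inter> V) \<union> (V \<inter> W))) \<le> r"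
    using vec.dim_subset[of _ V] vec.span_minimal[of "(U \<inter> V) \<union> (V \<inter> W)" V] s by auto
  moreover have "vec.dim ((U \<inter> V) \<inter> (V \<inter> W)) \<le> vec.dim (U \<inter> W)"
    by (rule vec.dim_subset) auto
  ultimately show ?thesis
    using dI_Er_eq[OF assms(1,2)] dI_Er_eq[OF assms(2,3)] dI_Er_eq[OF assms(1,3)] by linarith
qed

section \<open>Adapted bases and exchange steps\<close>

lemma span_Int_span_independent:
  fixes E :: "('a::field^'n) set"
  assumes "vec.independent E" "A \<subseteq> E" "B \<subseteq> E"
  shows "vec.span A \<inter> vec.span B = vec.span (A \<inter> B)"
proof -
  have fin: "finite A" "finite B"
    using assms vec.finiteI_independent finite_subset by blast+
  have ind: "vec.independent A" "vec.independent B" "vec.independent (A \<union> B)" "vec.independent (A \<inter> B)"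
    using assms vec.independent_mono by (metis Int_lower1 le_sup_iff subset_trans)+
  have "vec.dim {x + y |x y. x \<in> vec.span A \<and> y \<in> vec.span B} + vec.dim (vec.span A \<inter> vec.span B)
      = vec.dim (vec.span A) + vec.dim (vec.span B)"
    by (rule vec.dim_sums_Int) auto
  then have "card (A \<union> B) + vec.dim (vec.span A \<inter> vec.span B) = card A + card B"
    using ind by (simp add: vec.span_Un[symmetric] vec.dim_eq_card_independent)
  then have "vec.dim (vec.span A \<inter> vec.span B) = vec.dim (vec.span (A \<inter> B))"
    using card_Un_Int[OF fin] ind(4) by (simp add: vec.dim_eq_card_independent)
  then show ?thesis
    by (intro vec.subspace_dim_equal[symmetric]) (auto simp: vec.subspace_inter vec.span_mono)
qed

lemma card_basis_eq_CARD:
  fixes E :: "('a::field^'n) set"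
  assumes "vec.independent E" "vec.span E = UNIV"
  shows "card E = CARD('n)"
  using assms vec.dim_span_eq_card_independent[OF assms(1)] by (simp add: card_cart_basis)

lemma adapted_basis:
  fixes U V :: "('a::field^'n) set"
  assumes U: "vec.subspace U" and V: "vec.subspace V"
  obtains E D1 D2 where "vec.independent E" "vec.span E = UNIV" "D1 \<subseteq> E" "D2 \<subseteq> E"
    "U = vec.span D1" "V = vec.span D2"
proof -
  obtain B where B: "B \<subseteq> U \<inter> V" "vec.independent B" "U \<inter> V \<subseteq> vec.span B"
    "card B = vec.dim (U \<inter> V)"
    using vec.basis_exists by blast
  obtain D1 where D1: "B \<subseteq> D1" "D1 \<subseteq> U" "vec.independent D1" "U \<subseteq> vec.span D1"
    using vec.maximal_independent_subset_extend[of B U] B by auto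
  obtain D2 where D2: "B \<subseteq> D2" "D2 \<subseteq> V" "vec.independent D2" "V \<subseteq> vec.span D2"
    using vec.maximal_independent_subset_extend[of B V] B by auto
  have span_D: "vec.span D1 = U" "vec.span D2 = V"
    using D1 D2 vec.span_minimal[OF _ U] vec.span_minimal[OF _ V] by blast+
  have fin: "finite D1" "finite D2" using D1(3) D2(3) vec.finiteI_independent by auto
  have "D1 \<inter> D2 = B"
  proof (rule vec.spanning_subset_independent)
    show "vec.independent (D1 \<inter> D2)" using D1(3) vec.independent_mono by blast
  qed (use D1 D2 B in auto)
  then have "card (D1 \<union> D2) + vec.dim (U \<inter> V) = vec.dim U + vec.dim V"
    using card_Un_Int[OF fin] B(4) D1 D2 vec.basis_card_eq_dim by metis
  moreover have "vec.span (D1 \<union> D2) = vec.span (U \<union> V)"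
    unfolding vec.span_Un unfolding span_D[symmetric] vec.span_span by (rule refl)
  ultimately have "card (D1 \<union> D2) = vec.dim (vec.span (D1 \<union> D2))"
    using dim_span_Un_add_dim_Int[OF U V] by simp
  then have "vec.independent (D1 \<union> D2)"
    using vec.card_eq_dim[of "D1 \<union> D2" "vec.span (D1 \<union> D2)"] fin
    by (simp add: vec.span_superset)
  then obtain E where E: "D1 \<union> D2 \<subseteq> E" "vec.independent E" "UNIV \<subseteq> vec.span E"
    using vec.maximal_independent_subset_extend[of "D1 \<union> D2" UNIV] by auto
  show ?thesis
    by (rule that[of E D1 D2]) (use E span_D in auto)
qed

lemma span_subset_independent_Er:
  fixes E :: "('a::{finite,field}^'n) set"
  assumes "vec.independent E" "A \<subseteq> E"
  shows "vec.span A \<in> Er (card A)"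
  using assms unfolding Er_def
  by (simp add: vec.dim_eq_card_independent vec.independent_mono)

lemma dI_span_subsets:
  fixes E :: "('a::{finite,field}^'n) set"
  assumes E: "vec.independent E" and A: "A \<subseteq> E" "card A = r" and B: "B \<subseteq> E" "card B = r"
  shows "dI (vec.span A) (vec.span B) = r - card (A \<inter> B)"
proof -
  have "vec.span A \<in> Er r" "vec.span B \<in> Er r"
    using span_subset_independent_Er[OF E A(1)] span_subset_independent_Er[OF E B(1)] A B by auto
  then have "dI (vec.span A) (vec.span B) = r - vec.dim (vec.span A \<inter> vec.span B)"
    by (rule dI_Er_eq)
  also have "vec.span A \<inter> vec.span B = vec.span (A \<inter> B)"
    by (rule span_Int_span_independent[OF E A(1) B(1)])
  also have "vec.dim (vec.span (A \<inter> B)) = card (A \<inter> B)"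
    using E A B by (meson inf.coboundedI1 vec.dim_span_eq_card_independent vec.independent_mono)
  finally show ?thesis .
qed

lemma adapted_basis_Er:
  fixes U V :: "('a::{finite,field}^'n) set"
  assumes U: "U \<in> Er r" and V: "V \<in> Er r"
  obtains E D1 D2 where "vec.independent E" "card E = CARD('n)" "D1 \<subseteq> E" "D2 \<subseteq> E"
    "card D1 = r" "card D2 = r" "card (D1 \<inter> D2) = r - dI U V" "U = vec.span D1" "V = vec.span D2"
proof -
  have sub: "vec.subspace U" "vec.subspace V" using U V by (auto simp: Er_def)
  obtain E D1 D2 where E: "vec.independent E" "vec.span E = UNIV" "D1 \<subseteq> E" "D2 \<subseteq> E"
    "U = vec.span D1" "V = vec.span D2"
    by (rule adapted_basis[OF sub])
  have card: "card D1 = r" "card D2 = r"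
    using U V E(1,3,4) unfolding E(5,6) Er_def
    by (simp_all add: vec.dim_eq_card_independent vec.independent_mono)
  have "dI U V = r - card (D1 \<inter> D2)"
    unfolding E(5,6) by (rule dI_span_subsets[OF E(1,3) card(1) E(4) card(2)])
  moreover have "card (D1 \<inter> D2) \<le> r"
    using card(1) card_mono[OF vec.finiteI_independent[OF vec.independent_mono[OF E(1,3)]]] by auto
  ultimately have "card (D1 \<inter> D2) = r - dI U V" by simp
  then show ?thesis
    using that E card card_basis_eq_CARD[OF E(1,2)] by blast
qed

lemma ex_Er_step_closer:
  fixes U V :: "('a::{finite,field}^'n) set"
  assumes U: "U \<in> Er r" and V: "V \<in> Er r" and pos: "0 < dI U V"
  shows "\<exists>W \<in> Er r. dI U W = 1 \<and> dI W V = dI U V - 1"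
proof -
  obtain E D1 D2 where E: "vec.independent E" "card E = CARD('n)" "D1 \<subseteq> E" "D2 \<subseteq> E"
    "card D1 = r" "card D2 = r" "card (D1 \<inter> D2) = r - dI U V" "U = vec.span D1" "V = vec.span D2"
    by (rule adapted_basis_Er[OF U V])
  have le: "dI U V \<le> r" using dI_le[OF U V] .
  have fin: "finite D1" "finite D2"
    using E(1,3,4) vec.finiteI_independent vec.independent_mono by blast+
  have "card (D1 - D2) = dI U V" "card (D2 - D1) = dI U V"
    using card_Diff_subset_Int[of D1 D2] card_Diff_subset_Int[of D2 D1] fin E(5-7) le
    by (simp_all add: Int_commute)
  then obtain x y where x: "x \<in> D1" "x \<notin> D2" and y: "y \<in> D2" "y \<notin> D1"
    using pos by (metis Diff_iff all_not_in_conv card.empty less_irrefl)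
  define A where "A = insert y (D1 - {x})"
  have "0 < card D1" using x(1) fin(1) card_gt_0_iff by blast
  then have A: "A \<subseteq> E" "card A = r"
    using E(3-5) x y fin unfolding A_def by (auto simp: card_insert_if)
  have "A \<inter> D1 = D1 - {x}" "A \<inter> D2 = insert y (D1 \<inter> D2)"
    using x y unfolding A_def by auto
  then have "dI U (vec.span A) = 1" "dI (vec.span A) V = dI U V - 1"
    using dI_span_subsets[OF E(1,3,5) A] dI_span_subsets[OF E(1) A E(4,6)] E(5,7-9) fin x y pos le
    by (simp_all add: Int_commute)
  moreover have "vec.span A \<in> Er r" using span_subset_independent_Er[OF E(1) A(1)] A(2) by simp
  ultimately show ?thesis by blast
qed

lemma ex_Er_step_farther:
  fixes U V :: "('a::{finite,field}^'n) set"
  assumes U: "U \<in> Er r" and V: "V \<in> Er r" and lt: "dI U V < r" and n: "2 * r \<le> CARD('n)"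
  shows "\<exists>V' \<in> Er r. dI V V' = 1 \<and> dI U V' = dI U V + 1"
proof -
  obtain E D1 D2 where E: "vec.independent E" "card E = CARD('n)" "D1 \<subseteq> E" "D2 \<subseteq> E"
    "card D1 = r" "card D2 = r" "card (D1 \<inter> D2) = r - dI U V" "U = vec.span D1" "V = vec.span D2"
    by (rule adapted_basis_Er[OF U V])
  have finE: "finite E" using E(1) vec.finiteI_independent by blast
  have fin: "finite D1" "finite D2" using E(3,4) finE finite_subset by auto
  have "card (D1 \<union> D2) < card E"
    using card_Un_Int[OF fin] E(2,5-7) lt n by simp
  then have "E - (D1 \<union> D2) \<noteq> {}"
    using card_mono[OF finite_UnI[OF fin], of E] by auto
  then obtain e where e: "e \<in> E" "e \<notin> D1 \<union> D2" by blast
  have "D1 \<inter> D2 \<noteq> {}" using E(7) lt by auto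
  then obtain x where x: "x \<in> D1" "x \<in> D2" by blast
  define A where "A = insert e (D2 - {x})"
  have "0 < card D2" using x(2) fin(2) card_gt_0_iff by blast
  then have A: "A \<subseteq> E" "card A = r"
    using E(4,6) x e fin unfolding A_def by (auto simp: card_insert_if)
  have "D2 \<inter> A = D2 - {x}" "D1 \<inter> A = (D1 \<inter> D2) - {x}"
    using e unfolding A_def by auto
  then have "dI V (vec.span A) = 1" "dI U (vec.span A) = dI U V + 1"
    using dI_span_subsets[OF E(1,4,6) A] dI_span_subsets[OF E(1,3,5) A] E(5-9) fin x lt
    by (simp_all add: card_Diff_singleton)
  moreover have "vec.span A \<in> Er r" using span_subset_independent_Er[OF E(1) A(1)] A(2) by simp
  ultimately show ?thesis by blast
qed

lemma ex_Er_dI_eq_farther: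
  fixes U V :: "('a::{finite,field}^'n) set"
  assumes U: "U \<in> Er r" and V: "V \<in> Er r" and j: "dI U V \<le> j" "j \<le> r"
    and n: "2 * r \<le> CARD('n)"
  shows "\<exists>V' \<in> Er r. dI U V' = j \<and> dI V V' \<le> j - dI U V"
  using j
proof (induction j rule: dec_induct)
  case base
  then show ?case using V dI_self[OF V] by auto
next
  case (step j)
  obtain V'' where V'': "V'' \<in> Er r" "dI U V'' = j" "dI V V'' \<le> j - dI U V"
    using step by auto
  obtain V' where V': "V' \<in> Er r" "dI V'' V' = 1" "dI U V' = j + 1"
    using ex_Er_step_farther[OF U V''(1) _ n] V''(2) step by auto
  have "dI V V' \<le> dI V V'' + dI V'' V'" using dI_triangle V V''(1) V'(1) by blast
  then show ?case using V' V'' step by auto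
qed

lemma ex_Er_pushed_out:
  fixes U V :: "('a::{finite,field}^'n) set"
  assumes U: "U \<in> Er r" and V: "V \<in> Er r" and \<delta>: "\<delta> \<le> r" and n: "2 * r \<le> CARD('n)"
  shows "\<exists>V' \<in> Er r. dI U V' = max \<delta> (dI U V) \<and> dI V V' \<le> \<delta> - dI U V"
proof (cases "\<delta> \<le> dI U V")
  case True
  then show ?thesis using V dI_self[OF V] by auto
next
  case False
  then show ?thesis using ex_Er_dI_eq_farther[OF U V _ \<delta> n] by simp
qed

section \<open>Linear automorphisms and well-definedness of \<open>J\<^sub>C\<close>\<close>

definition linear_automorphism :: "('a::field^'n \<Rightarrow> 'a^'n) \<Rightarrow> bool" where
  "linear_automorphism f \<longleftrightarrow> Vector_Spaces.linear (*s) (*s) f \<and> bij f"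

lemma linear_automorphism_inv:
  "linear_automorphism f \<Longrightarrow> linear_automorphism (inv f)"
  unfolding linear_automorphism_def
  using vec.inj_linear_imp_inv_linear bij_imp_bij_inv bij_is_inj by blast

lemma linear_automorphism_dim_image:
  "linear_automorphism f \<Longrightarrow> vec.dim (f ` S) = vec.dim S"
  unfolding linear_automorphism_def by (meson bij_is_inj inj_on_subset subset_UNIV vec.dim_image_eq)

lemma linear_automorphism_Er:
  "linear_automorphism f \<Longrightarrow> U \<in> Er r \<Longrightarrow> f ` U \<in> Er r"
  unfolding Er_def
  by (simp add: linear_automorphism_dim_image vec.linear_subspace_image[of f] linear_automorphism_def)

lemma linear_automorphism_dI:
  "linear_automorphism f \<Longrightarrow> dI (f ` U) (f ` V) = dI U V"
  unfolding dI_def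
  by (simp add: linear_automorphism_dim_image image_Un[symmetric] vec.linear_span_image
      linear_automorphism_def)

lemma card_Er_dI_image:
  assumes f: "linear_automorphism f"
  shows "card {W \<in> Er r. P (dI W U) (dI W V)} = card {W \<in> Er r. P (dI W (f ` U)) (dI W (f ` V))}"
proof (rule bij_betw_same_card[of "(`) f"], rule bij_betw_imageI)
  have "inj f" using f unfolding linear_automorphism_def by (simp add: bij_is_inj)
  then show "inj_on ((`) f) {W \<in> Er r. P (dI W U) (dI W V)}"
    by (meson inj_image_eq_iff inj_onI)
  show "(`) f ` {W \<in> Er r. P (dI W U) (dI W V)} = {W \<in> Er r. P (dI W (f ` U)) (dI W (f ` V))}"
  proof safe
    fix W assume "W \<in> Er r" "P (dI W U) (dI W V)"
    then show "f ` W \<in> Er r" "P (dI (f ` W) (f ` U)) (dI (f ` W) (f ` V))"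
      using f by (auto simp: linear_automorphism_Er linear_automorphism_dI)
  next
    fix W assume W: "W \<in> Er r" "P (dI W (f ` U)) (dI W (f ` V))"
    have W_eq: "W = f ` (inv f ` W)"
      using f unfolding linear_automorphism_def by (simp add: image_image bij_is_surj surj_f_inv_f)
    have "inv f ` W \<in> Er r"
      using W f by (blast intro: linear_automorphism_Er linear_automorphism_inv)
    moreover have "P (dI (inv f ` W) U) (dI (inv f ` W) V)"
      using W(2) W_eq linear_automorphism_dI[OF f, of "inv f ` W"] by metis
    ultimately show "W \<in> (`) f ` {W \<in> Er r. P (dI W U) (dI W V)}" using W_eq by blast
  qed
qed

lemma obtain_bij_betw_preserving_subsets:
  assumes fin: "finite E" "finite E'"
    and sub: "D1 \<subseteq> E" "D2 \<subseteq> E" "D1' \<subseteq> E'" "D2' \<subseteq> E'"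
    and card: "card E = card E'" "card D1 = card D1'" "card D2 = card D2'"
      "card (D1 \<inter> D2) = card (D1' \<inter> D2')"
  obtains h where "bij_betw h E E'" "h ` D1 = D1'" "h ` D2 = D2'"
proof -
  have f: "finite D1" "finite D2" "finite D1'" "finite D2'"
    using fin sub finite_subset by blast+
  have "card (D1 - D2) = card (D1' - D2')" "card (D2 - D1) = card (D2' - D1')"
    using f card(2-4) by (simp_all add: card_Diff_subset_Int Int_commute)
  moreover have "card (E - (D1 \<union> D2)) = card (E' - (D1' \<union> D2'))"
    using card_Un_Int[OF f(1,2)] card_Un_Int[OF f(3,4)] card sub f
    by (simp add: card_Diff_subset)
  ultimately obtain h0 h1 h2 h3 where
      h0: "bij_betw h0 (D1 \<inter> D2) (D1' \<inter> D2')" and h1: "bij_betw h1 (D1 - D2) (D1' - D2')"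
    and h2: "bij_betw h2 (D2 - D1) (D2' - D1')"
    and h3: "bij_betw h3 (E - (D1 \<union> D2)) (E' - (D1' \<union> D2'))"
    using card(4) f fin by (meson bij_betw_iff_card finite_Diff finite_Int)
  define h where "h x = (if x \<in> D1 \<inter> D2 then h0 x else if x \<in> D1 - D2 then h1 x
      else if x \<in> D2 - D1 then h2 x else h3 x)" for x
  have "bij_betw h (D1 \<inter> D2 \<union> ((D1 - D2) \<union> ((D2 - D1) \<union> (E - (D1 \<union> D2)))))
      (D1' \<inter> D2' \<union> ((D1' - D2') \<union> ((D2' - D1') \<union> (E' - (D1' \<union> D2')))))"
    unfolding h_def by (intro bij_betw_disjoint_Un h0 h1 h2 h3) auto
  moreover have "D1 \<inter> D2 \<union> ((D1 - D2) \<union> ((D2 - D1) \<union> (E - (D1 \<union> D2)))) = E"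
    "D1' \<inter> D2' \<union> ((D1' - D2') \<union> ((D2' - D1') \<union> (E' - (D1' \<union> D2')))) = E'"
    using sub by auto
  moreover have "h ` D1 = D1'"
  proof -
    have "h ` (D1 \<inter> D2) = h0 ` (D1 \<inter> D2)" "h ` (D1 - D2) = h1 ` (D1 - D2)"
      unfolding h_def by (auto intro: image_cong)
    then have "h ` D1 = (D1' \<inter> D2') \<union> (D1' - D2')"
      using h0 h1 unfolding bij_betw_def by (metis Int_Diff_Un image_Un)
    then show ?thesis by blast
  qed
  moreover have "h ` D2 = D2'"
  proof -
    have "h ` (D1 \<inter> D2) = h0 ` (D1 \<inter> D2)" "h ` (D2 - D1) = h2 ` (D2 - D1)"
      unfolding h_def by (auto intro: image_cong)
    then have "h ` D2 = (D1' \<inter> D2') \<union> (D2' - D1')"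
      using h0 h2 unfolding bij_betw_def by (metis Int_Diff_Un Int_commute image_Un)
    then show ?thesis by blast
  qed
  ultimately show ?thesis using that by simp
qed

lemma obtain_linear_automorphism_extending:
  fixes E E' :: "('a::field^'n) set"
  assumes E: "vec.independent E" "vec.span E' = UNIV" and h: "bij_betw h E E'"
  obtains g :: "'a^'n \<Rightarrow> 'a^'n" where "linear_automorphism g" "\<And>D. D \<subseteq> E \<Longrightarrow> g ` vec.span D = vec.span (h ` D)"
proof -
  define g where "g = vec.construct E h"
  have lin: "Vector_Spaces.linear (*s) (*s) g"
    unfolding g_def using E(1) by (rule vec.linear_construct)
  have g_span: "g ` vec.span D = vec.span (h ` D)" if "D \<subseteq> E" for D
  proof -
    have "g ` D = h ` D"
      using that E(1) unfolding g_def by (intro image_cong) (auto simp: vec.construct_basis)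
    then show ?thesis using vec.linear_span_image[OF lin, of D] by simp
  qed
  have "range g = UNIV"
    using g_span[OF order_refl] bij_betw_imp_surj_on[OF h] E(2) by auto
  then have "linear_automorphism g"
    using lin vec.linear_surj_imp_inj[OF lin] by (simp add: linear_automorphism_def bij_def)
  then show ?thesis using that g_span by blast
qed

lemma obtain_linear_automorphism_image_pair:
  fixes U V U' V' :: "('a::field^'n) set"
  assumes sub: "vec.subspace U" "vec.subspace V" "vec.subspace U'" "vec.subspace V'"
    and dim: "vec.dim U = vec.dim U'" "vec.dim V = vec.dim V'" "vec.dim (U \<inter> V) = vec.dim (U' \<inter> V')"
  obtains f where "linear_automorphism f" "f ` U = U'" "f ` V = V'"
proof -
  obtain E D1 D2 where E: "vec.independent E" "vec.span E = UNIV" "D1 \<subseteq> E" "D2 \<subseteq> E"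
    "U = vec.span D1" "V = vec.span D2"
    by (rule adapted_basis[OF sub(1,2)])
  obtain E' D1' D2' where E': "vec.independent E'" "vec.span E' = UNIV" "D1' \<subseteq> E'" "D2' \<subseteq> E'"
    "U' = vec.span D1'" "V' = vec.span D2'"
    by (rule adapted_basis[OF sub(3,4)])
  have card: "card D = vec.dim (vec.span D)" if "D \<subseteq> E" for D
    using E(1) that by (simp add: vec.dim_eq_card_independent vec.independent_mono)
  have card': "card D = vec.dim (vec.span D)" if "D \<subseteq> E'" for D
    using E'(1) that by (simp add: vec.dim_eq_card_independent vec.independent_mono)
  have fin: "finite E" "finite E'" using E(1) E'(1) vec.finiteI_independent by auto
  have "card E = card E'" using card_basis_eq_CARD[OF E(1,2)] card_basis_eq_CARD[OF E'(1,2)] by simp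
  moreover have "card D1 = card D1'" "card D2 = card D2'"
    using card[OF E(3)] card[OF E(4)] card'[OF E'(3)] card'[OF E'(4)] dim(1,2) E(5,6) E'(5,6) by simp_all
  moreover have "card (D1 \<inter> D2) = card (D1' \<inter> D2')"
    using card[OF le_infI1[OF E(3)]] card'[OF le_infI1[OF E'(3)]] dim(3) E(5,6) E'(5,6)
      span_Int_span_independent[OF E(1,3,4)] span_Int_span_independent[OF E'(1,3,4)] by simp
  ultimately obtain h where h: "bij_betw h E E'" "h ` D1 = D1'" "h ` D2 = D2'"
    by (rule obtain_bij_betw_preserving_subsets[OF fin E(3,4) E'(3,4)])
  obtain g :: "'a^'n \<Rightarrow> 'a^'n" where g: "linear_automorphism g" "\<And>D. D \<subseteq> E \<Longrightarrow> g ` vec.span D = vec.span (h ` D)"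
    using obtain_linear_automorphism_extending[OF E(1) E'(2) h(1)] by blast
  have "g ` U = U'" "g ` V = V'"
    unfolding E(5,6) E'(5,6) using g(2)[OF E(3)] g(2)[OF E(4)] h(2,3) by simp_all
  then show ?thesis using that g(1) by blast
qed

lemma JC_eq_card:
  fixes U V :: "('a::{finite,field}^'n) set"
  assumes U: "U \<in> Er r" and V: "V \<in> Er r"
  shows "JC TYPE('a) TYPE('n) r u s (dI U V) = card {W \<in> Er r. dI W U = u \<and> dI W V = s}"
proof -
  define P where "P = (SOME P :: ('a^'n) set \<times> ('a^'n) set.
                 fst P \<in> Er r \<and> snd P \<in> Er r \<and> dI (fst P) (snd P) = dI U V)"
  have "\<exists>P :: ('a^'n) set \<times> ('a^'n) set. fst P \<in> Er r \<and> snd P \<in> Er r \<and> dI (fst P) (snd P) = dI U V"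
    using U V by (intro exI[of _ "(U, V)"]) auto
  then have "fst P \<in> Er r \<and> snd P \<in> Er r \<and> dI (fst P) (snd P) = dI U V"
    unfolding P_def by (rule someI_ex)
  then have P: "fst P \<in> Er r" "snd P \<in> Er r" "dI (fst P) (snd P) = dI U V" by auto
  have "vec.dim (fst P \<inter> snd P) = vec.dim (U \<inter> V)"
    using dI_Er_eq[OF P(1,2)] dI_Er_eq[OF U V] P(3) dim_Int_le_Er[OF P(1), of "snd P"]
      dim_Int_le_Er[OF U, of V]
    by linarith
  moreover have "vec.subspace (fst P)" "vec.subspace (snd P)" "vec.subspace U" "vec.subspace V"
    "vec.dim (fst P) = vec.dim U" "vec.dim (snd P) = vec.dim V"
    using P(1,2) U V by (simp_all add: Er_def)
  ultimately obtain f where f: "linear_automorphism f" "f ` fst P = U" "f ` snd P = V"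
    using obtain_linear_automorphism_image_pair[of "fst P" "snd P" U V] by metis
  have "JC TYPE('a) TYPE('n) r u s (dI U V) = card {W \<in> Er r. dI W (fst P) = u \<and> dI W (snd P) = s}"
    unfolding JC_def P_def Let_def by simp
  then show ?thesis
    using card_Er_dI_image[OF f(1), of r "\<lambda>a b. a = u \<and> b = s" "fst P" "snd P"] f(2,3) by simp
qed

section \<open>Counting subspaces\<close>

lemma bij_betw_span_insert:
  fixes x :: "'a::field^'n"
  assumes x: "x \<notin> vec.span F"
  shows "bij_betw (\<lambda>(a, s). a *s x + s) (UNIV \<times> vec.span F) (vec.span (insert x F))"
proof (rule bij_betw_imageI)
  show "inj_on (\<lambda>(a, s). a *s x + s) (UNIV \<times> vec.span F)"
  proof (rule inj_onI, clarsimp)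
    fix a s b t assume st: "s \<in> vec.span F" "t \<in> vec.span F" and e: "a *s x + s = b *s x + t"
    have "(a - b) *s x = t - s" using e by (simp add: algebra_simps vector_sub_rdistrib)
    moreover have "t - s \<in> vec.span F" using st by (simp add: vec.span_diff)
    ultimately have "a = b"
      using x by (metis eq_iff_diff_eq_0 vec.span_scale vector_smult_assoc vec.scale_one
          field_class.field_inverse)
    then show "a = b \<and> s = t" using e by simp
  qed
  have "vec.span (insert x F) = {y. \<exists>k. y - k *s x \<in> vec.span F}" by (rule vec.span_insert)
  also have "\<dots> = (\<lambda>(a, s). a *s x + s) ` (UNIV \<times> vec.span F)"
  proof safe
    fix y k assume "y - k *s x \<in> vec.span F"
    then show "y \<in> (\<lambda>(a, s). a *s x + s) ` (UNIV \<times> vec.span F)"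
      by (intro image_eqI[of _ _ "(k, y - k *s x)"]) auto
  next
    fix a s assume "s \<in> vec.span F"
    then show "\<exists>k. a *s x + s - k *s x \<in> vec.span F" by (intro exI[of _ a]) simp
  qed
  finally show "(\<lambda>(a, s). a *s x + s) ` (UNIV \<times> vec.span F) = vec.span (insert x F)" ..
qed

lemma card_span_independent:
  fixes B :: "('a::{finite,field}^'n) set"
  assumes "vec.independent B"
  shows "card (vec.span B) = CARD('a) ^ card B"
proof -
  have "finite B" using assms vec.finiteI_independent by blast
  then show ?thesis using assms
  proof (induction B rule: finite_induct)
    case (insert x F)
    have xF: "x \<notin> vec.span F" "vec.independent F"
      using insert.prems insert.hyps(2) vec.independent_insert[of x F] by auto
    have "card (vec.span (insert x F)) = CARD('a) * card (vec.span F)"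
      using bij_betw_same_card[OF bij_betw_span_insert[OF xF(1)]] by (simp add: card_cartesian_product)
    then show ?case using insert xF by simp
  qed simp
qed

lemma card_span:
  fixes X :: "('a::{finite,field}^'n) set"
  shows "card (vec.span X) = CARD('a) ^ vec.dim X"
proof -
  obtain B where B: "B \<subseteq> vec.span X" "vec.independent B" "vec.span X \<subseteq> vec.span B"
    "card B = vec.dim (vec.span X)"
    using vec.basis_exists by blast
  have "vec.span B = vec.span X"
    using B by (meson subset_antisym vec.span_minimal vec.subspace_span)
  then show ?thesis using card_span_independent[OF B(2)] B(4) by simp
qed

definition qprod :: "real \<Rightarrow> nat \<Rightarrow> nat \<Rightarrow> nat \<Rightarrow> real" where
  "qprod Q a b k = (\<Prod>i<k. Q ^ a - Q ^ (b + i))"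

lemma qprod_add: "qprod Q a b (k + j) = qprod Q a b k * qprod Q a (b + k) j"
  unfolding qprod_def by (induction j) (auto simp: add.assoc mult.assoc)

lemma qprod_shift: "qprod Q (c + a) c k = Q ^ (c * k) * qprod Q a 0 k"
proof -
  have "qprod Q (c + a) c k = (\<Prod>i<k. Q ^ c * (Q ^ a - Q ^ i))"
    unfolding qprod_def by (intro prod.cong) (auto simp: power_add algebra_simps)
  also have "\<dots> = Q ^ (c * k) * qprod Q a 0 k"
    unfolding qprod_def prod.distrib by (simp add: power_mult)
  finally show ?thesis .
qed

lemma qprod_pos: "1 < Q \<Longrightarrow> 0 < qprod Q k 0 k"
  unfolding qprod_def by (intro prod_pos) (auto intro: power_strict_increasing)

lemma qprod_split: "qprod Q (a + b) 0 (a + b) = qprod Q (a + b) 0 a * Q ^ (a * b) * qprod Q b 0 b"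
  using qprod_add[of Q "a + b" 0 a b] qprod_shift[of Q a b b] by simp

lemma qprod_swap:
  assumes "Q \<noteq> 0"
  shows "qprod Q (a + b) 0 a * qprod Q b 0 b = qprod Q (a + b) 0 b * qprod Q a 0 a"
  using qprod_split[of Q a b] qprod_split[of Q b a] assms by (simp add: ac_simps)

lemma gbinom_eq_qprod: "gbinom q m k = qprod q m 0 k / qprod q k 0 k"
  unfolding gbinom_def qprod_def by (simp add: prod_dividef)

lemma NC_mult_qprod:
  assumes q: "1 < q" and r: "t + l = r" "r \<le> n"
  shows "NC q n r l * (qprod q t 0 t * qprod q r t l) = qprod q r 0 t * qprod q n r l"
proof -
  let ?Q = "real q"
  have pos: "0 < qprod ?Q l 0 l" "0 < qprod ?Q t 0 t" using qprod_pos q by simp_all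
  have "qprod ?Q r t l = ?Q ^ (t * l) * qprod ?Q l 0 l"
    using qprod_shift[of ?Q t l l] r by simp
  moreover have "qprod ?Q n r l = ?Q ^ (r * l) * qprod ?Q (n - r) 0 l"
    using qprod_shift[of ?Q r "n - r" l] r by simp
  moreover have "?Q ^ (r * l) = ?Q ^ (l\<^sup>2) * ?Q ^ (t * l)"
    unfolding power_add[symmetric] using r(1)[symmetric] by (simp add: power2_eq_square algebra_simps)
  moreover have "qprod ?Q r 0 l * qprod ?Q t 0 t = qprod ?Q r 0 t * qprod ?Q l 0 l"
    using qprod_swap[of ?Q l t] q r by (simp add: add.commute)
  ultimately show ?thesis
    using pos unfolding NC_def gbinom_eq_qprod by (simp add: field_simps)
qed

definition indep_lists :: "('a::field^'n) set \<Rightarrow> ('a^'n) set \<Rightarrow> nat \<Rightarrow> ('a^'n) list set" where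
  "indep_lists S B k = {xs. length xs = k \<and> set xs \<subseteq> S \<and>
     (\<forall>i<k. xs ! i \<notin> vec.span (B \<union> set (take i xs)))}"

lemma indep_lists_0: "indep_lists S B 0 = {[]}"
  unfolding indep_lists_def by auto

lemma indep_lists_Suc:
  "indep_lists S B (Suc k) =
     (\<lambda>(xs, x). xs @ [x]) ` (SIGMA xs:indep_lists S B k. S - vec.span (B \<union> set xs))"
proof safe
  fix ys assume ys: "ys \<in> indep_lists S B (Suc k)"
  then have "length ys = Suc k" by (simp add: indep_lists_def)
  then obtain xs x where ys_eq: "ys = xs @ [x]" and len: "length xs = k"
    by (metis length_Suc_conv_rev)
  have "xs \<in> indep_lists S B k"
    unfolding indep_lists_def
  proof (intro CollectI conjI allI impI)
    show "length xs = k" "set xs \<subseteq> S" using ys len unfolding indep_lists_def ys_eq by auto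
    fix i assume i: "i < k"
    have "ys ! i \<notin> vec.span (B \<union> set (take i ys))" using ys i by (simp add: indep_lists_def)
    then show "xs ! i \<notin> vec.span (B \<union> set (take i xs))"
      using i len unfolding ys_eq by (simp add: nth_append)
  qed
  moreover have "x \<in> S - vec.span (B \<union> set xs)"
    using ys len unfolding indep_lists_def ys_eq by (auto dest!: spec[of _ k] simp: nth_append)
  ultimately show "ys \<in> (\<lambda>(xs, x). xs @ [x]) ` (SIGMA xs:indep_lists S B k. S - vec.span (B \<union> set xs))"
    using ys_eq by force
next
  fix xs x assume xs: "xs \<in> indep_lists S B k" and x: "x \<in> S" "x \<notin> vec.span (B \<union> set xs)"
  have len: "length xs = k" using xs by (simp add: indep_lists_def)
  show "xs @ [x] \<in> indep_lists S B (Suc k)"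
    unfolding indep_lists_def
  proof (intro CollectI conjI allI impI)
    show "length (xs @ [x]) = Suc k" "set (xs @ [x]) \<subseteq> S"
      using xs x len by (auto simp: indep_lists_def)
    fix i assume "i < Suc k"
    then consider "i < k" | "i = k" by linarith
    then show "(xs @ [x]) ! i \<notin> vec.span (B \<union> set (take i (xs @ [x])))"
      by cases (use xs x len in \<open>auto simp: indep_lists_def nth_append\<close>)
  qed
qed

lemma finite_indep_lists: "finite (indep_lists (S :: ('a::{finite,field}^'n) set) B k)"
  by (rule finite_subset[OF _ finite_lists_length_eq[of UNIV k]]) (auto simp: indep_lists_def)

lemma dim_Un_indep_lists:
  fixes B B' :: "('a::field^'n) set"
  assumes xs: "xs \<in> indep_lists S B k" and B': "B' \<subseteq> vec.span B"
  shows "vec.dim (B' \<union> set xs) = vec.dim B' + k"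
proof -
  have len: "length xs = k" using xs by (simp add: indep_lists_def)
  have "vec.dim (B' \<union> set (take i xs)) = vec.dim B' + i" if "i \<le> k" for i
    using that
  proof (induction i)
    case (Suc i)
    have take: "take (Suc i) xs = take i xs @ [xs ! i]"
      using Suc.prems len by (simp add: take_Suc_conv_app_nth)
    have "B' \<union> set (take i xs) \<subseteq> vec.span (B \<union> set (take i xs))"
      using B' vec.span_mono[of B "B \<union> set (take i xs)"] vec.span_superset[of "B \<union> set (take i xs)"]
      by auto
    then have "vec.span (B' \<union> set (take i xs)) \<subseteq> vec.span (B \<union> set (take i xs))"
      using vec.span_minimal vec.subspace_span by blast
    moreover have "xs ! i \<notin> vec.span (B \<union> set (take i xs))"
      using xs Suc.prems by (simp add: indep_lists_def)
    ultimately have "xs ! i \<notin> vec.span (B' \<union> set (take i xs))" by blast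
    then show ?case using Suc take by (simp add: vec.dim_insert)
  qed simp
  from this[of k] show ?thesis using len by simp
qed

lemma card_indep_lists:
  fixes S B :: "('a::{finite,field}^'n) set"
  assumes S: "vec.subspace S" and B: "B \<subseteq> S"
  shows "real (card (indep_lists S B k)) = qprod CARD('a) (vec.dim S) (vec.dim B) k"
  unfolding qprod_def
proof (induction k)
  case 0
  then show ?case by (simp add: indep_lists_0)
next
  case (Suc k)
  have card_step: "real (card (S - vec.span (B \<union> set xs)))
      = real CARD('a) ^ vec.dim S - real CARD('a) ^ (vec.dim B + k)"
    if xs: "xs \<in> indep_lists S B k" for xs
  proof -
    have sub: "vec.span (B \<union> set xs) \<subseteq> S"
      using xs B S by (intro vec.span_minimal) (auto simp: indep_lists_def)
    have "vec.dim (B \<union> set xs) = vec.dim B + k"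
      using dim_Un_indep_lists[OF xs vec.span_superset] .
    then have "card (vec.span (B \<union> set xs)) = CARD('a) ^ (vec.dim B + k)"
      by (simp add: card_span)
    moreover have "card S = CARD('a) ^ vec.dim S"
      using card_span[of S] unfolding vec.span_eq_iff[THEN iffD2, OF S] .
    ultimately show ?thesis
      using sub card_mono[OF finite sub] by (simp add: card_Diff_subset of_nat_diff)
  qed
  have "inj_on (\<lambda>(xs, x). xs @ [x]) (SIGMA xs:indep_lists S B k. S - vec.span (B \<union> set xs))"
    by (rule inj_onI) auto
  then have "card (indep_lists S B (Suc k))
      = (\<Sum>xs\<in>indep_lists S B k. card (S - vec.span (B \<union> set xs)))"
    unfolding indep_lists_Suc by (simp add: card_image card_SigmaI finite_indep_lists)
  then have "real (card (indep_lists S B (Suc k)))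
      = real (card (indep_lists S B k)) * (real CARD('a) ^ vec.dim S - real CARD('a) ^ (vec.dim B + k))"
    using card_step by simp
  then show ?case using Suc.IH by simp
qed

lemma mem_span_Un_Int_iff:
  fixes U W :: "('a::field^'n) set"
  assumes U: "vec.subspace U" and W: "vec.subspace W" and x: "x \<in> W" and Y: "Y \<subseteq> W"
  shows "x \<in> vec.span ((W \<inter> U) \<union> Y) \<longleftrightarrow> x \<in> vec.span (U \<union> Y)"
proof
  assume "x \<in> vec.span (U \<union> Y)"
  then obtain u v where uv: "x = u + v" "u \<in> vec.span U" "v \<in> vec.span Y"
    using vec.span_Un[of U Y] by auto
  have "v \<in> W" using uv(3) Y W by (meson subsetD vec.span_minimal)
  then have "u \<in> W" using x W uv(1) by (metis add_diff_cancel_right' vec.subspace_diff)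
  moreover have "u \<in> U" using uv(2) vec.span_minimal[OF order_refl U] by blast
  ultimately have "u \<in> vec.span (W \<inter> U)" using vec.span_superset by blast
  then show "x \<in> vec.span ((W \<inter> U) \<union> Y)" using uv vec.span_Un[of "W \<inter> U" Y] by auto
next
  assume "x \<in> vec.span ((W \<inter> U) \<union> Y)"
  then show "x \<in> vec.span (U \<union> Y)" by (meson Int_lower2 Un_mono order_refl subsetD vec.span_mono)
qed

lemma span_span_Un: "vec.span (vec.span X \<union> Y) = vec.span (X \<union> Y)"
proof (rule subset_antisym)
  show "vec.span (vec.span X \<union> Y) \<subseteq> vec.span (X \<union> Y)"
    by (rule vec.span_minimal) (auto intro: vec.span_mono[THEN subsetD] vec.span_superset[THEN subsetD])
  show "vec.span (X \<union> Y) \<subseteq> vec.span (vec.span X \<union> Y)"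
    by (rule vec.span_mono) (use vec.span_superset[of X] in auto)
qed

lemma indep_lists_Int_base:
  fixes U W :: "('a::field^'n) set"
  assumes U: "vec.subspace U" and W: "vec.subspace W" and S: "S \<subseteq> W"
  shows "indep_lists S (W \<inter> U) k = indep_lists S U k"
proof -
  have "xs ! i \<in> vec.span ((W \<inter> U) \<union> set (take i xs)) \<longleftrightarrow> xs ! i \<in> vec.span (U \<union> set (take i xs))"
    if "set xs \<subseteq> S" "i < length xs" for xs i
    using that S mem_span_Un_Int_iff[OF U W]
    by (meson nth_mem set_take_subset subset_trans subsetD)
  then show ?thesis unfolding indep_lists_def by auto
qed

lemma indep_lists_mono: "S \<subseteq> S' \<Longrightarrow> indep_lists S B k \<subseteq> indep_lists S' B k"
  unfolding indep_lists_def by auto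

lemma dim_span_indep_lists_pair:
  assumes us: "us \<in> indep_lists S {} t" and ws: "ws \<in> indep_lists S' B l" and "set us \<subseteq> vec.span B"
  shows "vec.dim (vec.span (set us \<union> set ws)) = t + l"
  using dim_Un_indep_lists[OF us, of "{}"] dim_Un_indep_lists[OF ws assms(3)] by simp

lemma span_indep_lists_pair_Er:
  fixes U :: "('a::{finite,field}^'n) set"
  assumes U: "U \<in> Er r" and r: "t + l = r"
    and us: "us \<in> indep_lists U {} t" and ws: "ws \<in> indep_lists UNIV U l"
  shows "vec.span (set us \<union> set ws) \<in> Er r" "vec.dim (vec.span (set us \<union> set ws) \<inter> U) = t"
proof -
  define W where "W = vec.span (set us \<union> set ws)"
  have U': "vec.subspace U" "vec.dim U = r" using U by (auto simp: Er_def)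
  have us_U: "set us \<subseteq> U" using us by (simp add: indep_lists_def)
  have W: "vec.subspace W" "vec.dim W = r"
    unfolding W_def using dim_span_indep_lists_pair[OF us ws] us_U vec.span_superset r by auto
  then show "vec.span (set us \<union> set ws) \<in> Er r" unfolding W_def Er_def by simp
  have "vec.span (W \<union> U) = vec.span (U \<union> set ws)"
    unfolding W_def span_span_Un using us_U by (metis Un_absorb1 Un_commute Un_left_commute)
  then have "vec.dim (vec.span (W \<union> U)) = r + l"
    using dim_Un_indep_lists[OF ws vec.span_superset] U' by simp
  then show "vec.dim (vec.span (set us \<union> set ws) \<inter> U) = t"
    using dim_span_Un_add_dim_Int[OF W(1) U'(1)] W U' r unfolding W_def by simp
qed

lemma indep_lists_pair_fibre:
  fixes U W :: "('a::{finite,field}^'n) set"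
  assumes U: "U \<in> Er r" and W: "W \<in> Er r" and r: "t + l = r"
  shows "{(us, ws) \<in> indep_lists U {} t \<times> indep_lists UNIV U l. vec.span (set us \<union> set ws) = W}
    = indep_lists (W \<inter> U) {} t \<times> indep_lists W (W \<inter> U) l"
proof -
  have U': "vec.subspace U" and W': "vec.subspace W" "vec.dim W = r"
    using U W by (auto simp: Er_def)
  have base: "indep_lists W (W \<inter> U) l = indep_lists W U l"
    by (rule indep_lists_Int_base[OF U' W'(1) order_refl])
  show ?thesis
  proof (intro subset_antisym subsetI)
    fix p assume "p \<in> {(us, ws) \<in> indep_lists U {} t \<times> indep_lists UNIV U l.
        vec.span (set us \<union> set ws) = W}"
    then obtain us ws where p: "p = (us, ws)" and us: "us \<in> indep_lists U {} t"
      and ws: "ws \<in> indep_lists UNIV U l" and W_eq: "W = vec.span (set us \<union> set ws)"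
      by auto
    have "set us \<subseteq> W" "set ws \<subseteq> W" unfolding W_eq using vec.span_superset by blast+
    then have "us \<in> indep_lists (W \<inter> U) {} t" "ws \<in> indep_lists W (W \<inter> U) l"
      using us ws unfolding base by (auto simp: indep_lists_def)
    then show "p \<in> indep_lists (W \<inter> U) {} t \<times> indep_lists W (W \<inter> U) l" using p by simp
  next
    fix p assume "p \<in> indep_lists (W \<inter> U) {} t \<times> indep_lists W (W \<inter> U) l"
    then obtain us ws where p: "p = (us, ws)" and us: "us \<in> indep_lists (W \<inter> U) {} t"
      and ws: "ws \<in> indep_lists W (W \<inter> U) l"
      by auto
    have "us \<in> indep_lists U {} t" "ws \<in> indep_lists UNIV U l"
      using indep_lists_mono[of "W \<inter> U" U] indep_lists_mono[of W UNIV] us ws base by blast+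
    moreover have "vec.span (set us \<union> set ws) = W"
    proof (rule vec.subspace_dim_equal)
      have "set us \<subseteq> W" "set ws \<subseteq> W" using us ws by (auto simp: indep_lists_def)
      then show "vec.span (set us \<union> set ws) \<subseteq> W" using W'(1) by (simp add: vec.span_minimal)
      have "set us \<subseteq> vec.span (W \<inter> U)"
        using us vec.span_superset[of "W \<inter> U"] unfolding indep_lists_def by blast
      then show "vec.dim W \<le> vec.dim (vec.span (set us \<union> set ws))"
        using dim_span_indep_lists_pair[OF us ws] W'(2) r by simp
    qed (use W' in simp_all)
    ultimately show "p \<in> {(us, ws) \<in> indep_lists U {} t \<times> indep_lists UNIV U l.
        vec.span (set us \<union> set ws) = W}" using p by simp
  qed
qed

lemma card_indep_lists_pair_fibre:
  fixes U W :: "('a::{finite,field}^'n) set"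
  assumes U: "U \<in> Er r" and W: "W \<in> Er r" "vec.dim (W \<inter> U) = t" and r: "t + l = r"
  shows "real (card {(us, ws) \<in> indep_lists U {} t \<times> indep_lists UNIV U l.
      vec.span (set us \<union> set ws) = W}) = qprod CARD('a) t 0 t * qprod CARD('a) r t l"
proof -
  have sub: "vec.subspace W" "vec.subspace (W \<inter> U)" "vec.dim W = r"
    using U W by (auto simp: Er_def vec.subspace_inter)
  show ?thesis
    unfolding indep_lists_pair_fibre[OF U W(1) r] card_cartesian_product
    using card_indep_lists[OF sub(2), of "{}" t] card_indep_lists[OF sub(1), of "W \<inter> U" l] sub(3) W(2)
    by simp
qed

lemma card_Er_dim_Int_mult_qprod:
  fixes U :: "('a::{finite,field}^'n) set"
  assumes U: "U \<in> Er r" and r: "t + l = r"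
  shows "real (card {W \<in> Er r. vec.dim (W \<inter> U) = t}) * (qprod CARD('a) t 0 t * qprod CARD('a) r t l)
    = qprod CARD('a) r 0 t * qprod CARD('a) CARD('n) r l"
proof -
  define X where "X = indep_lists U {} t \<times> indep_lists (UNIV :: ('a^'n) set) U l"
  define f where "f = (\<lambda>(us :: ('a^'n) list, ws). vec.span (set us \<union> set ws))"
  let ?Y = "{W \<in> Er r. vec.dim (W \<inter> U) = t}"
  have U': "vec.subspace U" "vec.dim U = r" using U by (auto simp: Er_def)
  have "f ` X \<subseteq> ?Y"
    unfolding X_def f_def using span_indep_lists_pair_Er[OF U r] by auto
  then have "real (card X) = (\<Sum>W\<in>?Y. real (card {p \<in> X. f p = W}))"
    using sum.group[of X ?Y f "\<lambda>_. 1 :: nat"] by (simp add: X_def finite_indep_lists flip: of_nat_sum)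
  also have "\<dots> = (\<Sum>W\<in>?Y. qprod CARD('a) t 0 t * qprod CARD('a) r t l)"
  proof (rule sum.cong[OF refl])
    fix W assume W: "W \<in> ?Y"
    have "{p \<in> X. f p = W} = {(us, ws) \<in> indep_lists U {} t \<times> indep_lists UNIV U l.
        vec.span (set us \<union> set ws) = W}"
      unfolding X_def f_def by auto
    then show "real (card {p \<in> X. f p = W}) = qprod CARD('a) t 0 t * qprod CARD('a) r t l"
      using card_indep_lists_pair_fibre[OF U _ _ r, of W] W by simp
  qed
  finally show ?thesis
    using card_indep_lists[OF U'(1), of "{}" t] card_indep_lists[OF vec.subspace_UNIV, of U l] U'
    unfolding X_def by (simp add: card_cartesian_product card_cart_basis)
qed

lemma card_Er_dI_eq_NC:
  fixes U :: "('a::{finite,field}^'n) set"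
  assumes U: "U \<in> Er r" and l: "l \<le> r" and r: "r \<le> CARD('n)"
  shows "real (card {W \<in> Er r. dI W U = l}) = NC CARD('a) CARD('n) r l"
proof -
  have q: "1 < CARD('a)"
    using card_mono[of UNIV "{0::'a, 1}"] by simp
  have layer_eq: "{W \<in> Er r. dI W U = l} = {W \<in> Er r. vec.dim (W \<inter> U) = r - l}"
    using dI_Er_eq[OF _ U] dim_Int_le_Er l by force
  define c where "c = qprod CARD('a) (r - l) 0 (r - l) * qprod CARD('a) r (r - l) l"
  have "0 < c"
    using qprod_pos[of "real CARD('a)"] qprod_shift[of "real CARD('a)" "r - l" l l] q l
    unfolding c_def by simp
  moreover have "real (card {W \<in> Er r. vec.dim (W \<inter> U) = r - l}) * c = NC CARD('a) CARD('n) r l * c"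
    using card_Er_dim_Int_mult_qprod[OF U, of "r - l" l] NC_mult_qprod[OF q, of "r - l" l r "CARD('n)"]
      l r unfolding c_def by simp
  ultimately show ?thesis using layer_eq by simp
qed

section \<open>Covering codes\<close>

definition dist_code :: "('a::{finite,field}^'n) set \<Rightarrow> ('a^'n) set set \<Rightarrow> nat" where
  "dist_code W C = Min ((\<lambda>c. dI W c) ` C)"

lemma dist_code_le: "c \<in> C \<Longrightarrow> dist_code W C \<le> dI W c"
  unfolding dist_code_def by simp

lemma dist_code_attained:
  assumes "C \<noteq> {}"
  obtains c where "c \<in> C" "dI W c = dist_code W C"
proof -
  have "dist_code W C \<in> (\<lambda>c. dI W c) ` C"
    unfolding dist_code_def using assms by (intro Min_in) auto
  then show ?thesis using that by auto
qed

lemma dist_code_eqI: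
  assumes "c \<in> C" "dI W c = d" "\<And>c. c \<in> C \<Longrightarrow> d \<le> dI W c"
  shows "dist_code W C = d"
proof -
  obtain c' where "c' \<in> C" "dI W c' = dist_code W C"
    using dist_code_attained assms(1) by blast
  then show ?thesis using dist_code_le[OF assms(1), of W] assms(2,3) by fastforce
qed

lemma ex_dist_code_eq:
  fixes C :: "('a::{finite,field}^'n) set set"
  assumes C: "C \<subseteq> Er r" "C \<noteq> {}" and U: "U \<in> Er r" and \<delta>: "\<delta> \<le> dist_code U C"
  shows "\<exists>W \<in> Er r. dist_code W C = \<delta>"
  using U \<delta>
proof (induction "dist_code U C" arbitrary: U)
  case 0
  then show ?case by auto
next
  case (Suc m)
  show ?case
  proof (cases "\<delta> = Suc m")
    case True
    then show ?thesis using Suc.hyps(2) Suc.prems(1) by metis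
  next
    case False
    obtain c0 where c0: "c0 \<in> C" "dI U c0 = Suc m"
      using dist_code_attained[OF C(2), of U] Suc.hyps(2) by metis
    obtain W where W: "W \<in> Er r" "dI U W = 1" "dI W c0 = m"
      using ex_Er_step_closer[OF Suc.prems(1), of c0] c0 C(1) by auto
    have "m \<le> dI W c" if "c \<in> C" for c
    proof -
      have "Suc m \<le> dI U c" using dist_code_le[OF that, of U] Suc.hyps(2) by simp
      moreover have "dI U c \<le> dI U W + dI W c"
        using dI_triangle[OF Suc.prems(1) W(1)] that C(1) by blast
      ultimately show ?thesis using W(2) by simp
    qed
    then have "dist_code W C = m" by (rule dist_code_eqI[OF c0(1) W(3)])
    then show ?thesis using Suc.hyps(1)[of W] W(1) False Suc.prems(2) Suc.hyps(2) by simp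
  qed
qed

text \<open>A codeword \<open>c\<close> travels at most \<open>\<delta> - dI U c\<close>, and \<open>dI U c\<close> is at least the covering radius
  of \<open>C\<close>, so every point covered by \<open>c\<close> stays within \<open>\<delta>\<close> of its new position.\<close>
lemma obtain_code_pushed_out:
  fixes C :: "('a::{finite,field}^'n) set set"
  assumes C: "C \<subseteq> Er r" "C \<noteq> {}" and U: "U \<in> Er r"
    and hole: "\<And>W. W \<in> Er r \<Longrightarrow> dist_code W C \<le> dist_code U C"
    and \<delta>: "dist_code U C \<le> \<delta>" "\<delta> \<le> r" and n: "2 * r \<le> CARD('n)"
  obtains C' :: "('a^'n) set set" where "C' \<subseteq> Er r" "C' \<noteq> {}" "card C' \<le> card C"
    "\<And>W. W \<in> Er r \<Longrightarrow> dist_code W C' \<le> \<delta>" "dist_code U C' = \<delta>"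
proof -
  define p where "p c = (SOME c'. c' \<in> Er r \<and> dI U c' = max \<delta> (dI U c) \<and> dI c c' \<le> \<delta> - dI U c)"
    for c
  have p: "p c \<in> Er r" "dI U (p c) = max \<delta> (dI U c)" "dI c (p c) \<le> \<delta> - dI U c" if "c \<in> C" for c
    using someI_ex[OF ex_Er_pushed_out[OF U _ \<delta>(2) n, of c, unfolded Bex_def]] that C(1)
    unfolding p_def by auto
  show ?thesis
  proof (rule that[of "p ` C"])
    show "p ` C \<subseteq> Er r" "p ` C \<noteq> {}" "card (p ` C) \<le> card C"
      using p(1) C(2) card_image_le[of C p] by auto
  next
    fix W :: "('a^'n) set" assume W: "W \<in> Er r"
    obtain c where c: "c \<in> C" "dI W c = dist_code W C"
      by (rule dist_code_attained[OF C(2)])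
    have "dist_code U C \<le> dI U c" by (rule dist_code_le[OF c(1)])
    moreover have "dI W (p c) \<le> dI W c + dI c (p c)"
      using dI_triangle[OF W _ p(1)[OF c(1)]] c(1) C(1) by blast
    ultimately have "dI W (p c) \<le> \<delta>"
      using p(3)[OF c(1)] hole[OF W] c(2) \<delta>(1) by arith
    then show "dist_code W (p ` C) \<le> \<delta>"
      using dist_code_le[of "p c" "p ` C" W] c(1) by simp
  next
    obtain c0 where c0: "c0 \<in> C" "dI U c0 = dist_code U C"
      by (rule dist_code_attained[OF C(2)])
    have "dI U (p c0) = \<delta>" using p(2)[OF c0(1)] c0(2) \<delta>(1) by simp
    moreover have "\<delta> \<le> dI U c" if "c \<in> p ` C" for c using that p(2) by auto
    ultimately show "dist_code U (p ` C) = \<delta>"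
      using c0(1) by (intro dist_code_eqI[of "p c0"]) auto
  qed
qed

lemma obtain_code_with_dist_code:
  fixes C :: "('a::{finite,field}^'n) set set"
  assumes C: "C \<subseteq> Er r" "C \<noteq> {}" and cov: "\<And>W. W \<in> Er r \<Longrightarrow> dist_code W C \<le> \<rho>"
    and \<delta>: "\<delta> \<le> \<rho>" "\<delta> \<le> r" and n: "2 * r \<le> CARD('n)"
  obtains U :: "('a^'n) set" and C' :: "('a^'n) set set" where "U \<in> Er r" "C' \<subseteq> Er r" "C' \<noteq> {}"
    "card C' \<le> card C" "\<And>W. W \<in> Er r \<Longrightarrow> dist_code W C' \<le> \<rho>" "dist_code U C' = \<delta>"
proof -
  have "Max ((\<lambda>W. dist_code W C) ` Er r) \<in> (\<lambda>W. dist_code W C) ` Er r"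
    using C by (intro Max_in) auto
  then obtain U0 where U0: "U0 \<in> Er r" "dist_code U0 C = Max ((\<lambda>W. dist_code W C) ` Er r)"
    by auto
  have hole: "dist_code W C \<le> dist_code U0 C" if "W \<in> Er r" for W
    using that U0(2) by simp
  show ?thesis
  proof (cases "\<delta> \<le> dist_code U0 C")
    case True
    then obtain U where "U \<in> Er r" "dist_code U C = \<delta>"
      using ex_dist_code_eq[OF C U0(1)] by blast
    then show ?thesis using that[of U C] C cov by blast
  next
    case False
    then have le: "dist_code U0 C \<le> \<delta>" by simp
    show ?thesis
    proof (rule obtain_code_pushed_out[OF C U0(1) hole le \<delta>(2) n])
      fix C' :: "('a^'n) set set"
      assume "C' \<subseteq> Er r" "C' \<noteq> {}" "card C' \<le> card C"
        "\<And>W. W \<in> Er r \<Longrightarrow> dist_code W C' \<le> \<delta>" "dist_code U0 C' = \<delta>"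
      then show ?thesis using that[of U0 C'] U0(1) \<delta>(1) order_trans by blast
    qed
  qed
qed

section \<open>Distance distributions of covering codes are feasible\<close>

lemma sum_card_dI_layers:
  fixes U :: "('a::{finite,field}^'n) set"
  assumes "U \<in> Er r" "C \<subseteq> Er r"
  shows "(\<Sum>i=0..r. card {c \<in> C. dI U c = i}) = card C"
proof -
  have "dI U ` C \<subseteq> {0..r}" using dI_le[OF assms(1)] assms(2) by auto
  then show ?thesis
    using sum.group[of C "{0..r}" "dI U" "\<lambda>_. 1 :: nat"] by simp
qed

lemma NC_le_sum_JC:
  fixes U :: "('a::{finite,field}^'n) set"
  assumes U: "U \<in> Er r" and C: "C \<subseteq> Er r" and cov: "\<And>W. W \<in> Er r \<Longrightarrow> \<exists>c\<in>C. dI W c \<le> \<rho>"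
    and l: "l \<le> r" and n: "r \<le> CARD('n)"
  shows "NC CARD('a) CARD('n) r l
    \<le> real (\<Sum>i=0..r. card {c \<in> C. dI U c = i} * (\<Sum>s=0..\<rho>. JC TYPE('a) TYPE('n) r l s i))"
proof -
  define G where "G c = {W \<in> Er r. dI W U = l \<and> dI W c \<le> \<rho>}" for c
  have card_G: "card (G c) = (\<Sum>s=0..\<rho>. JC TYPE('a) TYPE('n) r l s (dI U c))" if "c \<in> C" for c
  proof -
    have "(\<lambda>W. dI W c) ` G c \<subseteq> {0..\<rho>}" by (auto simp: G_def)
    then have "card (G c) = (\<Sum>s=0..\<rho>. card {W \<in> G c. dI W c = s})"
      using sum.group[of "G c" "{0..\<rho>}" "\<lambda>W. dI W c" "\<lambda>_. 1 :: nat"] by simp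
    also have "\<dots> = (\<Sum>s=0..\<rho>. card {W \<in> Er r. dI W U = l \<and> dI W c = s})"
      unfolding G_def by (intro sum.cong refl arg_cong[where f=card]) auto
    finally show ?thesis using JC_eq_card[OF U] that C by auto
  qed
  have "card {W \<in> Er r. dI W U = l} \<le> card (\<Union>c\<in>C. G c)"
    using cov by (intro card_mono) (auto simp: G_def)
  also have "\<dots> \<le> (\<Sum>c\<in>C. card (G c))" by (rule card_UN_le[OF finite])
  also have "\<dots> = (\<Sum>i=0..r. \<Sum>c\<in>{c \<in> C. dI U c = i}. card (G c))"
  proof -
    have "dI U ` C \<subseteq> {0..r}" using dI_le[OF U] C by auto
    then show ?thesis using sum.group[of C "{0..r}" "dI U" "\<lambda>c. card (G c)"] finite by simp
  qed
  also have "\<dots> = (\<Sum>i=0..r. card {c \<in> C. dI U c = i} * (\<Sum>s=0..\<rho>. JC TYPE('a) TYPE('n) r l s i))"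
    using card_G by (intro sum.cong refl) simp
  finally have "real (card {W \<in> Er r. dI W U = l})
      \<le> real (\<Sum>i=0..r. card {c \<in> C. dI U c = i} * (\<Sum>s=0..\<rho>. JC TYPE('a) TYPE('n) r l s i))"
    by (simp only: of_nat_le_iff)
  then show ?thesis using card_Er_dI_eq_NC[OF U l n] by simp
qed

lemma feasible_dI_layers:
  fixes U :: "('a::{finite,field}^'n) set"
  assumes U: "U \<in> Er r" and C: "C \<subseteq> Er r" "C \<noteq> {}"
    and cov: "\<And>W. W \<in> Er r \<Longrightarrow> dist_code W C \<le> \<rho>" and \<delta>: "dist_code U C = \<delta>"
    and n: "r \<le> CARD('n)"
  shows "feasible TYPE('a) TYPE('n) r \<rho> \<delta> (\<lambda>i. int (card {c \<in> C. dI U c = i}))"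
proof -
  have layer_le_NC: "real (card {c \<in> C. dI U c = i}) \<le> NC CARD('a) CARD('n) r i" if "i \<le> r" for i
  proof -
    have "{c \<in> C. dI U c = i} \<subseteq> {W \<in> Er r. dI W U = i}" using C(1) dI_commute[OF U] by auto
    then have "card {c \<in> C. dI U c = i} \<le> card {W \<in> Er r. dI W U = i}" by (intro card_mono) simp_all
    then show ?thesis using card_Er_dI_eq_NC[OF U that n] by simp
  qed
  have "{c \<in> C. dI U c = i} = {}" if "i < \<delta>" for i
    using dist_code_le[of _ C U] \<delta> that by fastforce
  moreover obtain c0 where "c0 \<in> C" "dI U c0 = \<delta>"
    using dist_code_attained[OF C(2), of U] \<delta> by blast
  then have "1 \<le> card {c \<in> C. dI U c = \<delta>}"
    by (simp add: Suc_le_eq card_gt_0_iff) blast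
  moreover have "\<delta> \<le> r" using dI_le[OF U, of c0] C(1) \<open>c0 \<in> C\<close> \<open>dI U c0 = \<delta>\<close> by auto
  moreover have "\<forall>W \<in> Er r. \<exists>c\<in>C. dI W c \<le> \<rho>"
    using cov dist_code_attained[OF C(2)] by metis
  ultimately show ?thesis
    unfolding feasible_def Let_def
    using layer_le_NC NC_le_sum_JC[OF U C(1) _ _ n, of \<rho>] by (auto simp flip: of_nat_sum of_nat_mult)
qed

lemma T_le_sum:
  assumes "feasible TYPE('a::{finite,field}) TYPE('n::finite) r \<rho> \<delta> A"
  shows "T TYPE('a) TYPE('n) r \<rho> \<delta> \<le> (\<Sum>i=0..r. A i)"
proof -
  let ?S = "{(\<Sum>i=0..r. A i) | A. feasible TYPE('a) TYPE('n) r \<rho> \<delta> A}"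
  define M where "M = (\<Sum>i=0..r. max 0 \<lfloor>NC CARD('a) CARD('n) r i\<rfloor>)"
  have bounds: "0 \<le> B i \<and> B i \<le> max 0 \<lfloor>NC CARD('a) CARD('n) r i\<rfloor>"
    if B: "feasible TYPE('a) TYPE('n) r \<rho> \<delta> B" and i: "i \<in> {0..r}" for B i
  proof (cases "i < \<delta>")
    case True
    then show ?thesis using B unfolding feasible_def Let_def by simp
  next
    case False
    then have "0 \<le> B i \<and> real_of_int (B i) \<le> NC CARD('a) CARD('n) r i"
      using B i unfolding feasible_def Let_def by (cases "i = \<delta>") auto
    then show ?thesis by (simp add: le_floor_iff)
  qed
  have "?S \<subseteq> {0..M}"
  proof
    fix x assume "x \<in> ?S"
    then obtain B where B: "feasible TYPE('a) TYPE('n) r \<rho> \<delta> B" "x = (\<Sum>i=0..r. B i)" by auto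
    show "x \<in> {0..M}"
      unfolding B(2) M_def using bounds[OF B(1)] by (auto intro: sum_nonneg sum_mono)
  qed
  then have "finite ?S" using finite_subset by blast
  then show ?thesis unfolding T_def using assms by (intro Min_le) auto
qed

lemma Er_nonempty:
  assumes "r \<le> CARD('n)"
  shows "(Er r :: ('a::{finite,field}^'n) set set) \<noteq> {}"
proof -
  obtain D where D: "D \<subseteq> (cart_basis :: ('a^'n) set)" "card D = r"
    using obtain_subset_with_card_n[of r "cart_basis :: ('a^'n) set"] assms
    by (auto simp: card_cart_basis)
  then show ?thesis using span_subset_independent_Er[OF independent_cart_basis D(1)] by auto
qed

lemma covering_radius_le_iff:
  fixes C :: "('a::{finite,field}^'n) set set"
  assumes "Er r \<noteq> ({} :: ('a^'n) set set)"
  shows "covering_radius r C \<le> \<rho> \<longleftrightarrow> (\<forall>W \<in> Er r. dist_code W C \<le> \<rho>)"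
  unfolding covering_radius_def dist_code_def using assms by (simp add: Max_le_iff)

lemma KC_attained:
  assumes n: "r \<le> CARD('n)"
  obtains C :: "('a::{finite,field}^'n) set set"
  where "C \<subseteq> Er r" "C \<noteq> {}" "\<forall>W \<in> Er r. dist_code W C \<le> \<rho>" "KC TYPE('a) TYPE('n) r \<rho> = card C"
proof -
  let ?codes = "{C :: ('a^'n) set set. C \<subseteq> Er r \<and> C \<noteq> {} \<and> covering_radius r C \<le> \<rho>}"
  have nonempty: "Er r \<noteq> ({} :: ('a^'n) set set)" by (rule Er_nonempty[OF n])
  have "dist_code W (Er r) = 0" if "W \<in> Er r" for W :: "('a^'n) set"
    using dist_code_le[OF that, of W] dI_self[OF that] by simp
  then have "Er r \<in> ?codes" using nonempty covering_radius_le_iff[OF nonempty] by auto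
  moreover have "card ` ?codes \<subseteq> card ` Pow (Er r :: ('a^'n) set set)" by (intro image_mono) auto
  then have "finite (card ` ?codes)" by (rule finite_subset) simp
  ultimately have "KC TYPE('a) TYPE('n) r \<rho> \<in> card ` ?codes"
    unfolding KC_def setcompr_eq_image by (intro Min_in) auto
  then show ?thesis using that covering_radius_le_iff[OF nonempty] by auto
qed

theorem proposition5:
  fixes r \<rho> :: nat
  assumes "r \<le> CARD('n) div 2" and "0 < \<rho>" and "\<rho> < r"
  shows "int (KC TYPE('a::{finite,field}) TYPE('n::finite) r \<rho>)
           \<ge> Max {T TYPE('a) TYPE('n) r \<rho> \<delta> | \<delta>. \<delta> \<le> \<rho>}"
proof -
  have n: "2 * r \<le> CARD('n)" using assms(1) by simp
  then have "r \<le> CARD('n)" by simp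
  then obtain C :: "('a^'n) set set" where C: "C \<subseteq> Er r" "C \<noteq> {}" "\<forall>W \<in> Er r. dist_code W C \<le> \<rho>"
    and KC: "KC TYPE('a) TYPE('n) r \<rho> = card C"
    by (rule KC_attained)
  have "T TYPE('a) TYPE('n) r \<rho> \<delta> \<le> int (card C)" if \<delta>: "\<delta> \<le> \<rho>" for \<delta>
  proof (rule obtain_code_with_dist_code[OF C(1,2) _ \<delta> _ n])
    show "\<And>W. W \<in> Er r \<Longrightarrow> dist_code W C \<le> \<rho>" using C(3) by blast
    show "\<delta> \<le> r" using \<delta> assms(3) by simp
    fix U :: "('a^'n) set" and C' assume U: "U \<in> Er r" and C': "C' \<subseteq> Er r" "C' \<noteq> {}" "card C' \<le> card C"
      "\<And>W. W \<in> Er r \<Longrightarrow> dist_code W C' \<le> \<rho>" "dist_code U C' = \<delta>"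
    have "T TYPE('a) TYPE('n) r \<rho> \<delta> \<le> (\<Sum>i=0..r. int (card {c \<in> C'. dI U c = i}))"
      using feasible_dI_layers[OF U C'(1,2,4,5)] n by (intro T_le_sum) simp
    also have "\<dots> = int (card C')" using sum_card_dI_layers[OF U C'(1)] by (simp flip: of_nat_sum)
    finally show ?thesis using C'(3) by simp
  qed
  moreover have "{T TYPE('a) TYPE('n) r \<rho> \<delta> | \<delta>. \<delta> \<le> \<rho>} = (\<lambda>\<delta>. T TYPE('a) TYPE('n) r \<rho> \<delta>) ` {..\<rho>}"
    by auto
  ultimately show ?thesis using KC by (simp add: Max_le_iff)
qed

end
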